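(* Let $\mathcal{X}\subseteq\mathbb{R}^D$, let $k:\mathcal{X}\times\mathcal{X}\to\mathbb{R}$ be an arbitrary positive definite kernel with reproducing kernel Hilbert space $\mathcal{H}_k$, and suppose $s\in\mathcal{H}_k$. Let $\mathbf{X}=\{\mathbf{x}_1,\dots,\mathbf{x}_N\}\subset\mathcal{X}$ and let the measurements be $y_i=s(\mathbf{x}_i)+\epsilon_i$, $i=1,\dots,N$, where the noise is bounded: $\epsilon_i^2<\sigma_\epsilon^2$ for all $i$. Then for every $\mathbf{x}\in\mathcal{X}$, $$E(\mathbf{x}\mid\mathbf{y}_{\mathbf{X}})\le \|s\|_{\mathcal{H}_k}\,P_{\mathbf{X}}(\mathbf{x})+\sqrt{\sigma_\epsilon^2\,N\,\Lambda_k^2(\mathbf{x})},$$ where $P_{\mathbf{X}}(\mathbf{x})=\sqrt{\sigma^2(\mathbf{x},\mathbf{x}\mid\mathbf{y}_{\mathbf{X}})}$ is the power function of $\mathbf{X}$ and $\Lambda_k(\mathbf{x})=\|K_{\mathbf{X}}^{-1}\mathbf{k}_{\mathbf{X}}(\mathbf{x})\|$ (Euclidean norm).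
   Context: A function $k:\mathcal{X}\times\mathcal{X}\to\mathbb{R}$ is positive definite if for every finite $\mathbf{X}\subset\mathcal{X}$ the matrix $[K_{\mathbf{X}}]_{i,j}=k(\mathbf{x}_i,\mathbf{x}_j)$ is positive definite. Notation: $[\mathbf{k}_{\mathbf{X}}(\mathbf{x})]_i=k(\mathbf{x},\mathbf{x}_i)$, $[\mathbf{y}_{\mathbf{X}}]_i=y_i$. The (zero-mean prior) Gaussian process regression estimate has mean $\mu(\mathbf{x}\mid\mathbf{y}_{\mathbf{X}})=\mathbf{k}_{\mathbf{X}}^{T}(\mathbf{x})K_{\mathbf{X}}^{-1}\mathbf{y}_{\mathbf{X}}$ and covariance $\sigma^2(\mathbf{x},\mathbf{x}'\mid\mathbf{y}_{\mathbf{X}})=k(\mathbf{x},\mathbf{x}')-\mathbf{k}_{\mathbf{X}}^{T}(\mathbf{x})K_{\mathbf{X}}^{-1}\mathbf{k}_{\mathbf{X}}(\mathbf{x}')$. The deterministic error is $E(\mathbf{x}\mid\mathbf{y}_{\mathbf{X}})=|s(\mathbf{x})-\mu(\mathbf{x}\mid\mathbf{y}_{\mathbf{X}})|$. *)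

theory Defs
  imports "HOL-Analysis.Analysis"
begin

definition pd_kernel :: "('a \<Rightarrow> 'a \<Rightarrow> real) \<Rightarrow> 'a set \<Rightarrow> bool" where
  "pd_kernel k X \<longleftrightarrow>
     (\<forall>x\<in>X. \<forall>y\<in>X. k x y = k y x) \<and>
     (\<forall>(zs :: 'a list) (c :: nat \<Rightarrow> real). distinct zs \<and> set zs \<subseteq> X \<and> (\<exists>i<length zs. c i \<noteq> 0) \<longrightarrow>
        (\<Sum>i<length zs. \<Sum>j<length zs. c i * c j * k (zs ! i) (zs ! j)) > 0)"

text \<open>Elements of the pre-Hilbert space span{k(.,z) | z in X}, given as finite lists of
(coefficient, centre) pairs; evaluation and squared pre-Hilbert norm.\<close>
definition comb_eval :: "('a \<Rightarrow> 'a \<Rightarrow> real) \<Rightarrow> (real \<times> 'a) list \<Rightarrow> 'a \<Rightarrow> real" where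
  "comb_eval k L x = (\<Sum>p\<leftarrow>L. fst p * k x (snd p))"

definition comb_sqnorm :: "('a \<Rightarrow> 'a \<Rightarrow> real) \<Rightarrow> (real \<times> 'a) list \<Rightarrow> real" where
  "comb_sqnorm k L = (\<Sum>p\<leftarrow>L. \<Sum>q\<leftarrow>L. fst p * fst q * k (snd p) (snd q))"

definition comb_diff :: "(real \<times> 'a) list \<Rightarrow> (real \<times> 'a) list \<Rightarrow> (real \<times> 'a) list" where
  "comb_diff L M = L @ map (\<lambda>q. (- fst q, snd q)) M"

text \<open>Moore--Aronszajn: H_k consists of the functions on X that are pointwise limits
of pre-Hilbert Cauchy sequences; the norm is the limit of the pre-Hilbert norms.\<close>
definition rkhs_approx ::
  "('a \<Rightarrow> 'a \<Rightarrow> real) \<Rightarrow> 'a set \<Rightarrow> ('a \<Rightarrow> real) \<Rightarrow> (nat \<Rightarrow> (real \<times> 'a) list) \<Rightarrow> bool" where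
  "rkhs_approx k X s F \<longleftrightarrow>
     (\<forall>n. set (map snd (F n)) \<subseteq> X) \<and>
     (\<forall>e>0. \<exists>M. \<forall>m\<ge>M. \<forall>n\<ge>M. comb_sqnorm k (comb_diff (F m) (F n)) < e\<^sup>2) \<and>
     (\<forall>x\<in>X. (\<lambda>n. comb_eval k (F n) x) \<longlonglongrightarrow> s x)"

definition in_rkhs :: "('a \<Rightarrow> 'a \<Rightarrow> real) \<Rightarrow> 'a set \<Rightarrow> ('a \<Rightarrow> real) \<Rightarrow> bool" where
  "in_rkhs k X s \<longleftrightarrow> (\<exists>F. rkhs_approx k X s F)"

definition rkhs_norm :: "('a \<Rightarrow> 'a \<Rightarrow> real) \<Rightarrow> 'a set \<Rightarrow> ('a \<Rightarrow> real) \<Rightarrow> real" where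
  "rkhs_norm k X s =
     Inf {c. \<exists>F. rkhs_approx k X s F \<and> (\<lambda>n. sqrt (comb_sqnorm k (F n))) \<longlonglongrightarrow> c}"

text \<open>GP regression quantities for data points xs indexed by a finite type 'n (N = CARD('n)).\<close>
definition gram :: "('a \<Rightarrow> 'a \<Rightarrow> real) \<Rightarrow> ('n::finite \<Rightarrow> 'a) \<Rightarrow> real^'n^'n" where
  "gram k xs = (\<chi> i j. k (xs i) (xs j))"

definition kvec :: "('a \<Rightarrow> 'a \<Rightarrow> real) \<Rightarrow> ('n::finite \<Rightarrow> 'a) \<Rightarrow> 'a \<Rightarrow> real^'n" where
  "kvec k xs x = (\<chi> i. k x (xs i))"

definition gp_mean :: "('a \<Rightarrow> 'a \<Rightarrow> real) \<Rightarrow> ('n::finite \<Rightarrow> 'a) \<Rightarrow> real^'n \<Rightarrow> 'a \<Rightarrow> real" where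
  "gp_mean k xs y x = kvec k xs x \<bullet> (matrix_inv (gram k xs) *v y)"

definition gp_cov :: "('a \<Rightarrow> 'a \<Rightarrow> real) \<Rightarrow> ('n::finite \<Rightarrow> 'a) \<Rightarrow> 'a \<Rightarrow> 'a \<Rightarrow> real" where
  "gp_cov k xs x x' = k x x' - kvec k xs x \<bullet> (matrix_inv (gram k xs) *v kvec k xs x')"

definition power_fun :: "('a \<Rightarrow> 'a \<Rightarrow> real) \<Rightarrow> ('n::finite \<Rightarrow> 'a) \<Rightarrow> 'a \<Rightarrow> real" where
  "power_fun k xs x = sqrt (gp_cov k xs x x)"

definition Lambda_k :: "('a \<Rightarrow> 'a \<Rightarrow> real) \<Rightarrow> ('n::finite \<Rightarrow> 'a) \<Rightarrow> 'a \<Rightarrow> real" where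
  "Lambda_k k xs x = norm (matrix_inv (gram k xs) *v kvec k xs x)"

definition det_error :: "('a \<Rightarrow> real) \<Rightarrow> ('a \<Rightarrow> 'a \<Rightarrow> real) \<Rightarrow> ('n::finite \<Rightarrow> 'a) \<Rightarrow> real^'n \<Rightarrow> 'a \<Rightarrow> real" where
  "det_error s k xs y x = \<bar>s x - gp_mean k xs y x\<bar>"

end

theory Submission
  imports Defs
begin

(* With exact data the GP mean is the kernel interpolant w(x) . s_X, where w(x) = K_X^-1 k_X(x),
   so the error splits into an interpolation error and the term w(x) . (s_X - y).
   The interpolation error s(x) - w(x) . s_X is the pairing of s with the residual
   h = k(.,x) - sum_i w_i(x) k(.,x_i), whose squared norm is sigma^2(x,x | y_X);
   Cauchy-Schwarz in the pre-Hilbert space of kernel combinations, passed to the limit along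
   a Cauchy sequence approximating s, bounds it by ||s|| P_X(x).  The noise term is at most
   ||w(x)|| ||s_X - y|| <= Lambda_k(x) sqrt (N sigma_eps^2). *)

section \<open>Pre-Hilbert space of kernel combinations\<close>

definition comb_inner :: "('a \<Rightarrow> 'a \<Rightarrow> real) \<Rightarrow> (real \<times> 'a) list \<Rightarrow> (real \<times> 'a) list \<Rightarrow> real" where
  "comb_inner k L M = (\<Sum>p\<leftarrow>L. \<Sum>q\<leftarrow>M. fst p * fst q * k (snd p) (snd q))"

definition comb_scale :: "real \<Rightarrow> (real \<times> 'a) list \<Rightarrow> (real \<times> 'a) list" where
  "comb_scale t L = map (\<lambda>q. (t * fst q, snd q)) L"

(* Merges repeated centres, so that the positivity of pd_kernel on distinct points applies. *)
definition comb_coeff :: "(real \<times> 'a) list \<Rightarrow> 'a \<Rightarrow> real" where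
  "comb_coeff L z = (\<Sum>p\<leftarrow>L. if snd p = z then fst p else 0)"

lemma comb_sqnorm_eq_inner: "comb_sqnorm k L = comb_inner k L L"
  by (simp add: comb_sqnorm_def comb_inner_def)

lemma comb_diff_eq_append_scale: "comb_diff L M = L @ comb_scale (-1) M"
  by (simp add: comb_diff_def comb_scale_def)

lemma comb_inner_Nil_left [simp]: "comb_inner k [] M = 0"
  by (simp add: comb_inner_def)

lemma comb_inner_Cons_left:
  "comb_inner k (p # L) M = fst p * comb_eval k M (snd p) + comb_inner k L M"
  by (simp add: comb_inner_def comb_eval_def mult.assoc sum_list_const_mult)

lemma comb_inner_map_left:
  "comb_inner k (map (\<lambda>i. (c i, z i)) is) M = (\<Sum>i\<leftarrow>is. c i * comb_eval k M (z i))"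
  by (induction "is") (simp_all add: comb_inner_Cons_left)

lemma comb_inner_append_left: "comb_inner k (L @ L') M = comb_inner k L M + comb_inner k L' M"
  by (simp add: comb_inner_def)

lemma comb_inner_append_right: "comb_inner k M (L @ L') = comb_inner k M L + comb_inner k M L'"
  by (simp add: comb_inner_def sum_list_addf)

lemma comb_inner_scale_left: "comb_inner k (comb_scale t L) M = t * comb_inner k L M"
  by (simp add: comb_inner_def comb_scale_def o_def mult.assoc sum_list_const_mult)

lemma comb_inner_scale_right: "comb_inner k M (comb_scale t L) = t * comb_inner k M L"
  by (simp add: comb_inner_def comb_scale_def o_def algebra_simps sum_list_const_mult)

lemma sum_list_map_swap:
  "(\<Sum>x\<leftarrow>xs. \<Sum>y\<leftarrow>ys. f x y) = (\<Sum>y\<leftarrow>ys. \<Sum>x\<leftarrow>xs. (f x y :: 'b::comm_monoid_add))"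
  by (induction xs) (simp_all add: sum_list_addf)

lemma comb_inner_commute:
  assumes "\<And>a b. a \<in> X \<Longrightarrow> b \<in> X \<Longrightarrow> k a b = k b a"
    and "set (map snd L) \<subseteq> X" "set (map snd M) \<subseteq> X"
  shows "comb_inner k L M = comb_inner k M L"
proof -
  have "(\<Sum>p\<leftarrow>L. \<Sum>q\<leftarrow>M. fst p * fst q * k (snd p) (snd q))
      = (\<Sum>p\<leftarrow>L. \<Sum>q\<leftarrow>M. fst q * fst p * k (snd q) (snd p))"
    using assms by (intro arg_cong[where f = sum_list] map_cong refl) (force simp: mult.commute)
  also have "\<dots> = (\<Sum>q\<leftarrow>M. \<Sum>p\<leftarrow>L. fst q * fst p * k (snd q) (snd p))"
    by (rule sum_list_map_swap)
  finally show ?thesis by (simp add: comb_inner_def)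
qed

lemma sum_list_eq_sum_comb_coeff:
  assumes "finite S" "set (map snd L) \<subseteq> S"
  shows "(\<Sum>p\<leftarrow>L. fst p * g (snd p)) = (\<Sum>z\<in>S. comb_coeff L z * g z)"
  using assms(2)
proof (induction L)
  case Nil
  then show ?case by (simp add: comb_coeff_def)
next
  case (Cons q L)
  have "(\<Sum>z\<in>S. comb_coeff (q # L) z * g z)
      = (\<Sum>z\<in>S. (if snd q = z then fst q * g z else 0) + comb_coeff L z * g z)"
    by (rule sum.cong) (auto simp: comb_coeff_def algebra_simps)
  also have "\<dots> = fst q * g (snd q) + (\<Sum>z\<in>S. comb_coeff L z * g z)"
    using Cons.prems assms(1) by (simp add: sum.distrib)
  finally show ?case using Cons by simp
qed

lemma comb_inner_eq_coeff_sum: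
  assumes "finite S" "set (map snd L) \<subseteq> S" "set (map snd M) \<subseteq> S"
  shows "comb_inner k L M = (\<Sum>z\<in>S. \<Sum>w\<in>S. comb_coeff L z * comb_coeff M w * k z w)"
proof -
  have "comb_inner k L M = (\<Sum>p\<leftarrow>L. fst p * (\<Sum>q\<leftarrow>M. fst q * k (snd p) (snd q)))"
    by (simp add: comb_inner_def sum_list_const_mult mult.assoc)
  also have "\<dots> = (\<Sum>p\<leftarrow>L. fst p * (\<Sum>w\<in>S. comb_coeff M w * k (snd p) w))"
    using sum_list_eq_sum_comb_coeff[OF assms(1,3)] by simp
  also have "\<dots> = (\<Sum>z\<in>S. comb_coeff L z * (\<Sum>w\<in>S. comb_coeff M w * k z w))"
    by (rule sum_list_eq_sum_comb_coeff[OF assms(1,2)])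
  finally show ?thesis by (simp add: sum_distrib_left mult.assoc)
qed

lemma pd_kernel_quadratic_form_pos:
  assumes "pd_kernel k X" "finite S" "S \<subseteq> X" "z \<in> S" "c z \<noteq> 0"
  shows "(\<Sum>z\<in>S. \<Sum>w\<in>S. c z * c w * k z w) > 0"
proof -
  obtain zs where zs: "set zs = S" "distinct zs"
    using finite_distinct_list[OF assms(2)] by blast
  have sum_S: "sum f S = (\<Sum>i<length zs. f (zs ! i))" for f :: "'a \<Rightarrow> real"
  proof -
    have "sum f S = sum_list (map f zs)" using zs by (simp add: sum_list_distinct_conv_sum_set)
    then show ?thesis by (simp add: sum_list_sum_nth atLeast0LessThan)
  qed
  obtain i where "i < length zs" "zs ! i = z"
    using assms(4) zs(1) by (metis in_set_conv_nth)
  then have "\<exists>i<length zs. c (zs ! i) \<noteq> 0" using assms(5) by blast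
  moreover have pd: "distinct zs \<and> set zs \<subseteq> X \<and> (\<exists>i<length zs. d i \<noteq> 0) \<longrightarrow>
      (\<Sum>i<length zs. \<Sum>j<length zs. d i * d j * k (zs ! i) (zs ! j)) > 0" for d
    using assms(1) unfolding pd_kernel_def by blast
  ultimately have "(\<Sum>i<length zs. \<Sum>j<length zs. c (zs ! i) * c (zs ! j) * k (zs ! i) (zs ! j)) > 0"
    using pd[of "\<lambda>i. c (zs ! i)"] assms(3) zs by blast
  then show ?thesis by (simp add: sum_S)
qed

lemma pd_kernel_quadratic_form_nonneg:
  assumes "pd_kernel k X" "finite S" "S \<subseteq> X"
  shows "(\<Sum>z\<in>S. \<Sum>w\<in>S. c z * c w * k z w) \<ge> 0"
proof (cases "\<exists>z\<in>S. c z \<noteq> 0")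
  case True
  then show ?thesis
    using pd_kernel_quadratic_form_pos[OF assms] by (meson less_imp_le)
qed simp

lemma comb_inner_self_nonneg:
  assumes "pd_kernel k X" "set (map snd L) \<subseteq> X"
  shows "comb_inner k L L \<ge> 0"
  using assms comb_inner_eq_coeff_sum[of "set (map snd L)" L L k]
    pd_kernel_quadratic_form_nonneg[of k X "set (map snd L)"]
  by simp

lemma quadratic_nonneg_imp_discrim_le:
  fixes a b c :: real
  assumes "c \<ge> 0" "\<And>t. a + 2 * t * b + t\<^sup>2 * c \<ge> 0"
  shows "b\<^sup>2 \<le> a * c"
proof (cases "c = 0")
  case True
  show ?thesis
  proof (rule ccontr)
    assume "\<not> ?thesis"
    then have "b \<noteq> 0" using True by simp
    have "a + 2 * (- (a + 1) / (2 * b)) * b + (- (a + 1) / (2 * b))\<^sup>2 * c \<ge> 0"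
      by (rule assms(2))
    with True \<open>b \<noteq> 0\<close> show False by (simp add: field_simps)
  qed
next
  case False
  then have "c > 0" using assms(1) by simp
  have "a + 2 * (- b / c) * b + (- b / c)\<^sup>2 * c \<ge> 0" by (rule assms(2))
  with \<open>c > 0\<close> show ?thesis by (simp add: power2_eq_square field_simps)
qed

lemma comb_inner_Cauchy_Schwarz:
  assumes "pd_kernel k X" "set (map snd L) \<subseteq> X" "set (map snd M) \<subseteq> X"
  shows "\<bar>comb_inner k L M\<bar> \<le> sqrt (comb_inner k L L) * sqrt (comb_inner k M M)"
proof -
  have sym: "\<And>a b. a \<in> X \<Longrightarrow> b \<in> X \<Longrightarrow> k a b = k b a"
    using assms(1) by (simp add: pd_kernel_def)
  have "(comb_inner k L M)\<^sup>2 \<le> comb_inner k L L * comb_inner k M M"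
  proof (rule quadratic_nonneg_imp_discrim_le)
    show "comb_inner k M M \<ge> 0" using comb_inner_self_nonneg assms(1,3) .
    fix t
    have "comb_inner k (L @ comb_scale t M) (L @ comb_scale t M)
        = comb_inner k L L + 2 * t * comb_inner k L M + t\<^sup>2 * comb_inner k M M"
      using comb_inner_commute[OF sym assms(3,2)]
      by (simp add: comb_inner_append_left comb_inner_append_right comb_inner_scale_left
          comb_inner_scale_right power2_eq_square algebra_simps)
    moreover have "set (map snd (L @ comb_scale t M)) \<subseteq> X"
      using assms(2,3) by (auto simp: comb_scale_def)
    ultimately show "comb_inner k L L + 2 * t * comb_inner k L M + t\<^sup>2 * comb_inner k M M \<ge> 0"
      using comb_inner_self_nonneg[OF assms(1), of "L @ comb_scale t M"] by simp
  qed
  then have "sqrt ((comb_inner k L M)\<^sup>2) \<le> sqrt (comb_inner k L L * comb_inner k M M)"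
    by (rule real_sqrt_le_mono)
  then show ?thesis by (simp add: real_sqrt_mult)
qed

lemma comb_norm_diff_le:
  assumes "pd_kernel k X" "set (map snd L) \<subseteq> X" "set (map snd M) \<subseteq> X"
  shows "\<bar>sqrt (comb_sqnorm k L) - sqrt (comb_sqnorm k M)\<bar> \<le> sqrt (comb_sqnorm k (comb_diff L M))"
proof -
  have sym: "\<And>a b. a \<in> X \<Longrightarrow> b \<in> X \<Longrightarrow> k a b = k b a"
    using assms(1) by (simp add: pd_kernel_def)
  define l where "l = sqrt (comb_inner k L L)"
  define m where "m = sqrt (comb_inner k M M)"
  have l: "l \<ge> 0" "l\<^sup>2 = comb_inner k L L" and m: "m \<ge> 0" "m\<^sup>2 = comb_inner k M M"
    using comb_inner_self_nonneg[OF assms(1)] assms(2,3) by (auto simp: l_def m_def)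
  have "(l - m)\<^sup>2 \<le> comb_inner k L L - 2 * comb_inner k L M + comb_inner k M M"
    using comb_inner_Cauchy_Schwarz[OF assms] l m by (simp add: power2_diff l_def m_def)
  also have "\<dots> = comb_sqnorm k (comb_diff L M)"
    using comb_inner_commute[OF sym assms(3,2)]
    by (simp add: comb_sqnorm_eq_inner comb_diff_eq_append_scale comb_inner_append_left
        comb_inner_append_right comb_inner_scale_left comb_inner_scale_right)
  finally have "sqrt ((l - m)\<^sup>2) \<le> sqrt (comb_sqnorm k (comb_diff L M))"
    by (rule real_sqrt_le_mono)
  then show ?thesis by (simp add: l_def m_def comb_sqnorm_eq_inner)
qed

lemma rkhs_approx_norms_convergent:
  assumes "pd_kernel k X" "rkhs_approx k X s F"
  shows "convergent (\<lambda>n. sqrt (comb_sqnorm k (F n)))"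
proof -
  have FX: "\<And>n. set (map snd (F n)) \<subseteq> X"
    using assms(2) by (simp add: rkhs_approx_def)
  have "Cauchy (\<lambda>n. sqrt (comb_sqnorm k (F n)))"
  proof (rule metric_CauchyI)
    fix e :: real
    assume "e > 0"
    then obtain M where M: "\<forall>m\<ge>M. \<forall>n\<ge>M. comb_sqnorm k (comb_diff (F m) (F n)) < e\<^sup>2"
      using assms(2) by (auto simp: rkhs_approx_def)
    have "dist (sqrt (comb_sqnorm k (F m))) (sqrt (comb_sqnorm k (F n))) < e"
      if "m \<ge> M" "n \<ge> M" for m n
    proof -
      have "sqrt (comb_sqnorm k (comb_diff (F m) (F n))) < sqrt (e\<^sup>2)"
        using M that by (simp only: real_sqrt_less_iff)
      then show ?thesis
        using comb_norm_diff_le[OF assms(1) FX FX, of m n] \<open>e > 0\<close> by (simp add: dist_real_def)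
    qed
    then show "\<exists>M. \<forall>m\<ge>M. \<forall>n\<ge>M. dist (sqrt (comb_sqnorm k (F m))) (sqrt (comb_sqnorm k (F n))) < e"
      by blast
  qed
  then show ?thesis by (simp add: Cauchy_convergent_iff)
qed

lemma rkhs_norm_bound:
  assumes "pd_kernel k X" "in_rkhs k X s" "P \<ge> 0"
    and "\<And>F c. rkhs_approx k X s F \<Longrightarrow> (\<lambda>n. sqrt (comb_sqnorm k (F n))) \<longlonglongrightarrow> c \<Longrightarrow> a \<le> c * P"
  shows "a \<le> rkhs_norm k X s * P"
proof -
  define S where "S = {c. \<exists>F. rkhs_approx k X s F \<and> (\<lambda>n. sqrt (comb_sqnorm k (F n))) \<longlonglongrightarrow> c}"
  have bound: "\<And>c. c \<in> S \<Longrightarrow> a \<le> c * P"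
    using assms(4) by (auto simp: S_def)
  obtain F where F: "rkhs_approx k X s F"
    using assms(2) by (auto simp: in_rkhs_def)
  then obtain c where "(\<lambda>n. sqrt (comb_sqnorm k (F n))) \<longlonglongrightarrow> c"
    using rkhs_approx_norms_convergent[OF assms(1)] by (auto simp: convergent_def)
  with F have c: "c \<in> S" by (auto simp: S_def)
  show ?thesis
  proof (cases "P = 0")
    case True
    then show ?thesis using bound[OF c] by simp
  next
    case False
    with assms(3) have "P > 0" by simp
    have "a / P \<le> Inf S"
      using c bound \<open>P > 0\<close> by (intro cInf_greatest) (auto simp: pos_divide_le_eq)
    with \<open>P > 0\<close> show ?thesis by (simp add: rkhs_norm_def S_def pos_divide_le_eq)
  qed
qed

section \<open>Gram matrices and GP weights\<close>

lemma matrix_inv_inverse: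
  assumes "invertible A"
  shows "A ** matrix_inv A = mat 1" "matrix_inv A ** A = mat 1"
  using someI_ex[OF assms[unfolded invertible_def]] by (simp_all add: matrix_inv_def)

lemma transpose_matrix_inv_symmetric:
  fixes A :: "'a::comm_semiring_1^'n^'n"
  assumes "invertible A" "transpose A = A"
  shows "transpose (matrix_inv A) = matrix_inv A"
proof -
  have "transpose (matrix_inv A) ** A = mat 1"
    by (metis assms(2) matrix_inv_inverse(1)[OF assms(1)] matrix_transpose_mul transpose_mat)
  then show ?thesis
    by (metis matrix_inv_inverse[OF assms(1)] matrix_mul_assoc matrix_mul_lid matrix_mul_rid)
qed

lemma gram_quadratic_form:
  "v \<bullet> (gram k xs *v v) = (\<Sum>i\<in>UNIV. \<Sum>j\<in>UNIV. v $ i * v $ j * k (xs i) (xs j))"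
  by (simp add: gram_def inner_vec_def matrix_vector_mult_def sum_distrib_left mult_ac)

lemma gram_quadratic_form_pos:
  assumes "pd_kernel k X" "inj xs" "\<And>i. xs i \<in> X" "v \<noteq> 0"
  shows "v \<bullet> (gram k xs *v v) > 0"
proof -
  define c where "c z = v $ inv xs z" for z
  obtain i where "v $ i \<noteq> 0"
    using assms(4) by (metis vec_eq_iff zero_index)
  have "v \<bullet> (gram k xs *v v) = (\<Sum>z\<in>range xs. \<Sum>w\<in>range xs. c z * c w * k z w)"
    using assms(2) by (simp add: gram_quadratic_form sum.reindex c_def)
  also have "\<dots> > 0"
    using assms(3) \<open>v $ i \<noteq> 0\<close> inv_f_f[OF assms(2)]
    by (intro pd_kernel_quadratic_form_pos[OF assms(1), of _ "xs i"]) (auto simp: c_def)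
  finally show ?thesis .
qed

lemma gram_invertible:
  assumes "pd_kernel k X" "inj xs" "\<And>i. xs i \<in> X"
  shows "invertible (gram k xs)"
proof -
  have "v = 0" if "gram k xs *v v = 0" for v
    using gram_quadratic_form_pos[OF assms, of v] that by force
  then show ?thesis
    by (simp add: invertible_left_inverse matrix_left_invertible_ker)
qed

lemma transpose_gram:
  assumes "\<And>i j. k (xs i) (xs j) = k (xs j) (xs i)"
  shows "transpose (gram k xs) = gram k xs"
  using assms by (simp add: gram_def transpose_def vec_eq_iff)

definition gp_weights :: "('a \<Rightarrow> 'a \<Rightarrow> real) \<Rightarrow> ('n::finite \<Rightarrow> 'a) \<Rightarrow> 'a \<Rightarrow> real^'n" where
  "gp_weights k xs x = matrix_inv (gram k xs) *v kvec k xs x"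

lemma gram_mult_gp_weights:
  assumes "invertible (gram k xs)"
  shows "gram k xs *v gp_weights k xs x = kvec k xs x"
  by (simp add: gp_weights_def matrix_vector_mul_assoc matrix_inv_inverse[OF assms])

lemma gp_mean_eq_inner_gp_weights:
  assumes "invertible (gram k xs)" "transpose (gram k xs) = gram k xs"
  shows "gp_mean k xs y x = gp_weights k xs x \<bullet> y"
proof -
  have "gp_mean k xs y x = (kvec k xs x v* matrix_inv (gram k xs)) \<bullet> y"
    by (simp add: gp_mean_def dot_lmul_matrix)
  then show ?thesis
    by (metis assms transpose_matrix_inv_symmetric gp_weights_def transpose_matrix_vector)
qed

lemma gp_error_representer:
  fixes xs :: "'n::finite \<Rightarrow> 'a"
  assumes "pd_kernel k X" "inj xs" "\<And>i. xs i \<in> X" "x \<in> X"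
  obtains h where "set (map snd h) \<subseteq> X" "comb_sqnorm k h = gp_cov k xs x x"
    and "\<And>M. comb_inner k h M
               = comb_eval k M x - (\<Sum>i\<in>UNIV. gp_weights k xs x $ i * comb_eval k M (xs i))"
proof -
  let ?w = "gp_weights k xs x"
  obtain ixs :: "'n list" where ixs: "distinct ixs" "set ixs = UNIV"
    using finite_distinct_list[OF finite_class.finite_UNIV] by blast
  define h where "h = (1, x) # map (\<lambda>i. (- ?w $ i, xs i)) ixs"
  have hX: "set (map snd h) \<subseteq> X"
    using assms(3,4) by (auto simp: h_def)
  have inner_h: "comb_inner k h M = comb_eval k M x - (\<Sum>i\<in>UNIV. ?w $ i * comb_eval k M (xs i))" for M
    using ixs by (simp add: h_def comb_inner_Cons_left comb_inner_map_left
        sum_list_distinct_conv_sum_set sum_negf)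
  have eval_h: "comb_eval k h z = k z x - (\<Sum>j\<in>UNIV. ?w $ j * k z (xs j))" for z
    using ixs by (simp add: h_def comb_eval_def sum_list_distinct_conv_sum_set sum_negf)
  have "comb_eval k h (xs i) = 0" for i
  proof -
    have "(gram k xs *v ?w) $ i = kvec k xs x $ i"
      using gram_mult_gp_weights[OF gram_invertible[OF assms(1-3)]] by simp
    moreover have "k x (xs i) = k (xs i) x"
      using assms(1,3,4) by (simp add: pd_kernel_def)
    ultimately show ?thesis
      by (simp add: eval_h gram_def kvec_def matrix_vector_mult_def mult.commute)
  qed
  then have "comb_sqnorm k h = comb_eval k h x"
    by (simp add: comb_sqnorm_eq_inner inner_h)
  also have "\<dots> = gp_cov k xs x x"
    by (simp add: eval_h gp_cov_def gp_weights_def kvec_def inner_vec_def mult.commute)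
  finally show ?thesis
    using that hX inner_h by blast
qed

(* Not automatic: sqrt of a negative real is negative. *)
lemma power_fun_nonneg:
  assumes "pd_kernel k X" "inj xs" "\<And>i. xs i \<in> X" "x \<in> X"
  shows "power_fun k xs x \<ge> 0"
  using comb_inner_self_nonneg[OF assms(1)]
  by (metis gp_error_representer[OF assms] comb_sqnorm_eq_inner power_fun_def real_sqrt_ge_zero)

lemma rkhs_approx_interpolation_error:
  assumes "pd_kernel k X" "inj xs" "\<And>i. xs i \<in> X" "x \<in> X"
    and "rkhs_approx k X s F" "(\<lambda>n. sqrt (comb_sqnorm k (F n))) \<longlonglongrightarrow> c"
  shows "\<bar>s x - gp_weights k xs x \<bullet> (\<chi> i. s (xs i))\<bar> \<le> c * power_fun k xs x"
proof -
  obtain h where hX: "set (map snd h) \<subseteq> X" and hh: "comb_sqnorm k h = gp_cov k xs x x"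
    and inner_h: "\<And>M. comb_inner k h M
               = comb_eval k M x - (\<Sum>i\<in>UNIV. gp_weights k xs x $ i * comb_eval k M (xs i))"
    using gp_error_representer[OF assms(1-4)] by blast
  have FX: "\<And>n. set (map snd (F n)) \<subseteq> X"
    using assms(5) by (simp add: rkhs_approx_def)
  have "(\<lambda>n. comb_eval k (F n) z) \<longlonglongrightarrow> s z" if "z \<in> X" for z
    using assms(5) that by (simp add: rkhs_approx_def)
  note conv = this
  have "(\<lambda>n. \<bar>comb_inner k h (F n)\<bar>) \<longlonglongrightarrow> \<bar>s x - (\<Sum>i\<in>UNIV. gp_weights k xs x $ i * s (xs i))\<bar>"
    unfolding inner_h by (intro tendsto_rabs tendsto_diff tendsto_sum tendsto_mult_left conv assms(3,4))
  moreover have "(\<lambda>n. sqrt (comb_sqnorm k (F n)) * power_fun k xs x) \<longlonglongrightarrow> c * power_fun k xs x"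
    using assms(6) by (rule tendsto_mult_right)
  moreover have "\<bar>comb_inner k h (F n)\<bar> \<le> sqrt (comb_sqnorm k (F n)) * power_fun k xs x" for n
    using comb_inner_Cauchy_Schwarz[OF assms(1) hX FX]
    by (simp add: power_fun_def comb_sqnorm_eq_inner mult.commute flip: hh)
  ultimately show ?thesis
    by (simp add: inner_vec_def LIMSEQ_le)
qed

lemma power_function_error_bound:
  assumes "pd_kernel k X" "in_rkhs k X s" "inj xs" "\<And>i. xs i \<in> X" "x \<in> X"
  shows "\<bar>s x - gp_mean k xs (\<chi> i. s (xs i)) x\<bar> \<le> rkhs_norm k X s * power_fun k xs x"
proof -
  have "transpose (gram k xs) = gram k xs"
    using assms(1,4) by (intro transpose_gram) (simp add: pd_kernel_def)
  then have "gp_mean k xs (\<chi> i. s (xs i)) x = gp_weights k xs x \<bullet> (\<chi> i. s (xs i))"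
    by (rule gp_mean_eq_inner_gp_weights[OF gram_invertible[OF assms(1,3,4)]])
  then show ?thesis
    using rkhs_approx_interpolation_error[OF assms(1,3-5)]
    by (intro rkhs_norm_bound[OF assms(1,2) power_fun_nonneg[OF assms(1,3-5)]]) simp
qed

lemma gp_mean_diff_le:
  assumes "invertible (gram k xs)" "transpose (gram k xs) = gram k xs"
  shows "\<bar>gp_mean k xs y x - gp_mean k xs y' x\<bar> \<le> Lambda_k k xs x * norm (y - y')"
  using Cauchy_Schwarz_ineq2[of "gp_weights k xs x" "y - y'"]
  by (simp add: gp_mean_eq_inner_gp_weights[OF assms] inner_diff_right Lambda_k_def gp_weights_def)

lemma norm_vec_le_sqrt_card:
  fixes v :: "real^'n"
  assumes "\<And>i. (v $ i)\<^sup>2 \<le> b"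
  shows "norm v \<le> sqrt (b * CARD('n))"
proof -
  have "(\<Sum>i\<in>UNIV. (v $ i)\<^sup>2) \<le> (\<Sum>i\<in>(UNIV :: 'n set). b)"
    using assms by (rule sum_mono)
  then show ?thesis
    by (simp add: norm_vec_def L2_set_def mult.commute)
qed

theorem theorem1:
  fixes X :: "(real^'d) set"
    and k :: "real^'d \<Rightarrow> real^'d \<Rightarrow> real"
    and s :: "real^'d \<Rightarrow> real"
    and xs :: "'n::finite \<Rightarrow> real^'d"
    and y :: "real^'n"
    and sigma_eps :: real
    and x :: "real^'d"
  assumes "pd_kernel k X"
    and "in_rkhs k X s"
    and "inj xs"
    and "\<And>i. xs i \<in> X"
    and "\<And>i. (y $ i - s (xs i))\<^sup>2 < sigma_eps\<^sup>2"
    and "x \<in> X"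
  shows "det_error s k xs y x
           \<le> rkhs_norm k X s * power_fun k xs x
             + sqrt (sigma_eps\<^sup>2 * real CARD('n) * (Lambda_k k xs x)\<^sup>2)"
proof -
  let ?sX = "\<chi> i. s (xs i)"
  have G: "invertible (gram k xs)" "transpose (gram k xs) = gram k xs"
    using gram_invertible[OF assms(1,3,4)] assms(1,4)
    by (auto intro: transpose_gram simp: pd_kernel_def)
  have noise: "norm (?sX - y) \<le> sqrt (sigma_eps\<^sup>2 * CARD('n))"
    using assms(5) by (intro norm_vec_le_sqrt_card) (simp add: power2_commute less_imp_le)
  have "det_error s k xs y x
      \<le> \<bar>s x - gp_mean k xs ?sX x\<bar> + \<bar>gp_mean k xs ?sX x - gp_mean k xs y x\<bar>"
    unfolding det_error_def by linarith
  also have "\<dots> \<le> rkhs_norm k X s * power_fun k xs x + Lambda_k k xs x * norm (?sX - y)"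
    using power_function_error_bound[OF assms(1-4,6)] gp_mean_diff_le[OF G] by (rule add_mono)
  also have "\<dots> \<le> rkhs_norm k X s * power_fun k xs x + Lambda_k k xs x * sqrt (sigma_eps\<^sup>2 * CARD('n))"
    using noise by (simp add: Lambda_k_def mult_left_mono)
  also have "Lambda_k k xs x * sqrt (sigma_eps\<^sup>2 * CARD('n))
      = sqrt (sigma_eps\<^sup>2 * real CARD('n) * (Lambda_k k xs x)\<^sup>2)"
    by (simp add: Lambda_k_def real_sqrt_mult mult.commute)
  finally show ?thesis .
qed

end
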